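(* Let $A_2\in\mathbf{C}^{n\times n}$. The discrete-time antilinear system $x(t+1)=A_2^{\#}x(t)^{\#}$, $t\in\mathbf{Z}^+$, is asymptotically stable if and only if $A_2^{\#}A_2$ is Schur, i.e. $\rho(A_2^{\#}A_2)<1$. The continuous-time antilinear system $\dot x(t)=A_2^{\#}x(t)^{\#}$, $t\in\mathbf{R}^+$, is not asymptotically stable for any $A_2\in\mathbf{C}^{n\times n}$.
   Context: $P^{\#}$ denotes entrywise conjugate and $\rho(\cdot)$ the spectral radius. A system is stable if for each $\delta>0$ there is $\varepsilon>0$ with $\|x_0\|\le\varepsilon\Rightarrow\|x(t)\|\le\delta$ for all $t\ge0$, and asymptotically stable if it is stable and, for each $\epsilon>0$ (and such initial states), there is $\eta$ with $\|x(t)\|\le\epsilon$ for all $t\ge\eta$ (equivalently, all solutions tend to zero). *)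

theory Defs
  imports "HOL-Analysis.Analysis"
begin

definition vconj :: "complex^'n \<Rightarrow> complex^'n" where
  "vconj x = (\<chi> i. cnj (x $ i))"

definition mconj :: "complex^'n^'m \<Rightarrow> complex^'n^'m" where
  "mconj A = (\<chi> i j. cnj (A $ i $ j))"

definition eigenvalues :: "complex^'n^'n \<Rightarrow> complex set" where
  "eigenvalues A = {c. \<exists>v. v \<noteq> 0 \<and> A *v v = c *s v}"

definition spectral_radius :: "complex^'n^'n \<Rightarrow> real" where
  "spectral_radius A = Sup (cmod ` eigenvalues A)"

definition schur :: "complex^'n^'n \<Rightarrow> bool" where
  "schur A \<longleftrightarrow> spectral_radius A < 1"

primrec dt_sol :: "complex^'n^'n \<Rightarrow> complex^'n \<Rightarrow> nat \<Rightarrow> complex^'n" where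
  "dt_sol A x0 0 = x0"
| "dt_sol A x0 (Suc t) = mconj A *v vconj (dt_sol A x0 t)"

definition dt_stable :: "complex^'n^'n \<Rightarrow> bool" where
  "dt_stable A \<longleftrightarrow> (\<forall>\<delta>>0. \<exists>\<epsilon>>0. \<forall>x0. norm x0 \<le> \<epsilon> \<longrightarrow> (\<forall>t. norm (dt_sol A x0 t) \<le> \<delta>))"

definition dt_asymp_stable :: "complex^'n^'n \<Rightarrow> bool" where
  "dt_asymp_stable A \<longleftrightarrow> dt_stable A \<and> (\<forall>x0. dt_sol A x0 \<longlonglongrightarrow> 0)"

definition ct_solution :: "complex^'n^'n \<Rightarrow> (real \<Rightarrow> complex^'n) \<Rightarrow> bool" where
  "ct_solution A x \<longleftrightarrow>
     (\<forall>t\<ge>0. (x has_vector_derivative (mconj A *v vconj (x t))) (at t within {0..}))"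

definition ct_stable :: "complex^'n^'n \<Rightarrow> bool" where
  "ct_stable A \<longleftrightarrow> (\<forall>\<delta>>0. \<exists>\<epsilon>>0. \<forall>x. ct_solution A x \<and> norm (x 0) \<le> \<epsilon> \<longrightarrow>
        (\<forall>t\<ge>0. norm (x t) \<le> \<delta>))"

definition ct_asymp_stable :: "complex^'n^'n \<Rightarrow> bool" where
  "ct_asymp_stable A \<longleftrightarrow> ct_stable A \<and> (\<forall>x. ct_solution A x \<longrightarrow> (x \<longlongrightarrow> 0) at_top)"

end

theory Submission
  imports Defs "Jordan_Normal_Form.Spectral_Radius"
begin

text \<open>
  Two steps of \<open>x(t+1) = A\<^sup># x(t)\<^sup>#\<close> give the linear recursion
  \<open>x(t+2) = A\<^sup># A x(t)\<close>. Hence the discrete system is asymptotically stable exactly when the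
  powers of \<open>A\<^sup># A\<close> tend to zero, which by the Jordan normal form happens iff
  \<open>\<rho>(A\<^sup># A) < 1\<close>; the odd steps only add one bounded map. An eigenvector of modulus at least
  one yields a non-decaying solution.

  In continuous time, if \<open>x\<close> solves \<open>x' = A\<^sup># x\<^sup>#\<close> then so does \<open>t \<mapsto> i x(-t)\<close>, since the
  antilinear right-hand side turns the factor \<open>i\<close> into \<open>-i\<close>. So asymptotic stability forces a
  nonzero solution defined on all of \<open>\<real>\<close> to be small at some time \<open>-T\<close>, and stability then keeps
  it small up to time \<open>0\<close>, a contradiction. Such solutions exist: if \<open>A\<^sup># A v = s\<^sup>2 v\<close> then
  \<open>t \<mapsto> s exp(s t) v + exp(cnj s t) A\<^sup># v\<^sup>#\<close> is one.
\<close>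

lemma vconj_vconj [simp]: "vconj (vconj x) = x"
  by (simp add: vconj_def Finite_Cartesian_Product.vec_eq_iff)

lemma mconj_mconj [simp]: "mconj (mconj A) = A"
  by (simp add: mconj_def Finite_Cartesian_Product.vec_eq_iff)

lemma vconj_add: "vconj (x + y) = vconj x + vconj y"
  by (simp add: vconj_def Finite_Cartesian_Product.vec_eq_iff)

lemma vconj_scalar_mult: "vconj (c *s x) = cnj c *s vconj x"
  by (simp add: vconj_def Finite_Cartesian_Product.vec_eq_iff)

lemma vconj_matrix_vector_mult: "vconj (A *v x) = mconj A *v vconj x"
  by (simp add: vconj_def mconj_def Finite_Cartesian_Product.vec_eq_iff matrix_vector_mult_def cnj_sum)

lemma norm_vconj [simp]: "norm (vconj x) = norm x"
  by (simp add: vconj_def norm_vec_def)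

lemma norm_scalar_mult_cvec: "norm (c *s x) = cmod c * norm (x :: complex^'n)"
  by (simp add: norm_vec_def norm_mult L2_set_right_distrib)

lemma norm_le_sum_cmod: "norm (x :: complex^'n) \<le> (\<Sum>i\<in>UNIV. cmod (x $ i))"
  unfolding norm_vec_def by (rule L2_set_le_sum) auto

lemma norm_matrix_vector_mult_le:
  fixes A :: "complex^'n^'m"
  assumes entries: "\<And>i j. cmod (A $ i $ j) \<le> c"
  shows "norm (A *v x) \<le> real CARD('m) * real CARD('n) * c * norm x"
proof -
  have entry: "cmod ((A *v x) $ i) \<le> real CARD('n) * c * norm x" for i
  proof -
    have "cmod ((A *v x) $ i) \<le> (\<Sum>j\<in>UNIV. cmod (A $ i $ j) * cmod (x $ j))"
      using norm_sum[of "\<lambda>j. A $ i $ j * x $ j" UNIV] by (simp add: matrix_vector_mult_def norm_mult)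
    also have "\<dots> \<le> (\<Sum>j\<in>(UNIV::'n set). c * norm x)"
      by (intro sum_mono mult_mono)
        (auto intro: entries order_trans[OF norm_ge_zero entries] Finite_Cartesian_Product.norm_nth_le)
    finally show ?thesis by simp
  qed
  have "norm (A *v x) \<le> (\<Sum>i\<in>UNIV. cmod ((A *v x) $ i))"
    by (rule norm_le_sum_cmod)
  also have "\<dots> \<le> (\<Sum>i\<in>(UNIV::'m set). real CARD('n) * c * norm x)"
    by (intro sum_mono entry)
  finally show ?thesis by simp
qed

lemma scaleR_matrix_vector_mult:
  fixes A :: "'a::real_algebra_1^'n^'m"
  shows "(c *\<^sub>R A) *v x = c *\<^sub>R (A *v x)"
  by (simp add: Finite_Cartesian_Product.vec_eq_iff matrix_vector_mult_def scaleR_sum_right)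

definition matpow :: "'a::semiring_1^'n^'n \<Rightarrow> nat \<Rightarrow> 'a^'n^'n" where
  "matpow A k = ((\<lambda>B. B ** A) ^^ k) (Finite_Cartesian_Product.mat 1)"

lemma matpow_0 [simp]: "matpow A 0 = Finite_Cartesian_Product.mat 1"
  by (simp add: matpow_def)

lemma matpow_Suc: "matpow A (Suc k) = matpow A k ** A"
  by (simp add: matpow_def)

lemma matpow_Suc_left [simp]: "matpow A (Suc k) = A ** matpow A k"
proof (induction k)
  case (Suc k)
  then show ?case by (metis matpow_Suc matrix_mul_assoc)
qed (simp add: matpow_Suc)

lemma matpow_eigenvector:
  fixes A :: "'a::field^'n^'n"
  assumes "A *v v = c *s v"
  shows "matpow A k *v v = c ^ k *s v"
  by (induction k)
    (simp_all add: assms flip: matrix_vector_mul_assoc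
      add: vector_scalar_commute vector_smult_assoc mult.commute)

lemma matpow_scaleR_mult_vec:
  fixes A :: "'a::real_algebra_1^'n^'n"
  shows "matpow (c *\<^sub>R A) k *v x = c ^ k *\<^sub>R (matpow A k *v x)"
proof (induction k)
  case (Suc k)
  have "A *v (c ^ k *\<^sub>R y) = c ^ k *\<^sub>R (A *v y)" for y
    using matrix_vector_mul_linear[of A] by (rule linear_scale)
  then show ?case
    by (simp add: Suc scaleR_matrix_vector_mult flip: matrix_vector_mul_assoc)
qed simp

definition jnf_vec :: "(nat \<Rightarrow> 'n) \<Rightarrow> 'a^'n::finite \<Rightarrow> 'a Matrix.vec" where
  "jnf_vec h x = Matrix.vec CARD('n) (\<lambda>k. x $ h k)"

definition jnf_mat :: "(nat \<Rightarrow> 'n) \<Rightarrow> 'a^'n^'n::finite \<Rightarrow> 'a Matrix.mat" where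
  "jnf_mat h A = Matrix.mat CARD('n) CARD('n) (\<lambda>(i, j). A $ h i $ h j)"

lemma jnf_vec_carrier [simp]: "jnf_vec h (x :: 'a^'n::finite) \<in> carrier_vec CARD('n)"
  by (simp add: jnf_vec_def)

lemma jnf_mat_carrier [simp]: "jnf_mat h (A :: 'a^'n::finite^'n) \<in> carrier_mat CARD('n) CARD('n)"
  by (simp add: jnf_mat_def)

lemma ex_bij_betw_nat_index: "\<exists>h :: nat \<Rightarrow> 'n::finite. bij_betw h {0..<CARD('n)} UNIV"
  using ex_bij_betw_nat_finite[of "UNIV :: 'n set"] by simp

context
  fixes h :: "nat \<Rightarrow> 'n::finite"
  assumes h: "bij_betw h {0..<CARD('n)} UNIV"
begin

lemma reindex_sum_jnf: "(\<Sum>k\<in>{0..<CARD('n)}. f (h k)) = (\<Sum>i\<in>UNIV. f i)"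
  using sum.reindex_bij_betw[OF h] .

lemma jnf_index_surj: obtains k where "k < CARD('n)" "h k = i"
  using h unfolding bij_betw_def by (metis UNIV_I atLeastLessThan_iff imageE)

lemma jnf_vec_matrix_vector_mult:
  fixes A :: "'a::semiring_1^'n^'n"
  shows "jnf_vec h (A *v x) = jnf_mat h A *\<^sub>v jnf_vec h x"
  by (rule eq_vecI)
    (auto simp: jnf_vec_def jnf_mat_def scalar_prod_def matrix_vector_mult_def simp flip: reindex_sum_jnf)

lemma jnf_mat_matrix_matrix_mult:
  fixes A :: "'a::semiring_1^'n^'n"
  shows "jnf_mat h (A ** B) = jnf_mat h A * jnf_mat h B"
  by (rule eq_matI)
    (auto simp: jnf_mat_def scalar_prod_def matrix_matrix_mult_def simp flip: reindex_sum_jnf)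

lemma jnf_mat_one: "jnf_mat h (Finite_Cartesian_Product.mat 1 :: 'a::semiring_1^'n^'n) = 1\<^sub>m CARD('n)"
proof -
  have "inj_on h {0..<CARD('n)}"
    using h by (rule bij_betw_imp_inj_on)
  then show ?thesis
    by (intro eq_matI) (auto simp: jnf_mat_def Finite_Cartesian_Product.mat_def inj_on_eq_iff)
qed

lemma jnf_mat_matpow: "jnf_mat h (matpow (A :: 'a::semiring_1^'n^'n) k) = jnf_mat h A ^\<^sub>m k"
proof (induction k)
  case (Suc k)
  then show ?case
    by (simp add: matpow_Suc jnf_mat_matrix_matrix_mult del: matpow_Suc_left)
qed (simp add: jnf_mat_one carrier_matD[OF jnf_mat_carrier])

lemma jnf_vec_scalar_mult: "jnf_vec h (c *s x) = c \<cdot>\<^sub>v jnf_vec h x"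
  by (rule eq_vecI) (auto simp: jnf_vec_def)

lemma jnf_vec_zero: "jnf_vec h 0 = 0\<^sub>v CARD('n)"
  by (rule eq_vecI) (auto simp: jnf_vec_def)

lemma jnf_vec_eq_iff: "jnf_vec h x = jnf_vec h y \<longleftrightarrow> x = y"
proof
  assume eq: "jnf_vec h x = jnf_vec h y"
  show "x = y"
  proof (rule Finite_Cartesian_Product.vec_eq_iff[THEN iffD2], rule allI)
    fix i
    obtain k where "k < CARD('n)" "h k = i" by (rule jnf_index_surj)
    then show "x $ i = y $ i"
      using arg_cong[OF eq, of "\<lambda>u. u $ k"] by (simp add: jnf_vec_def)
  qed
qed simp

lemma jnf_vec_surj:
  assumes "u \<in> carrier_vec CARD('n)"
  obtains x where "jnf_vec h x = u"
proof
  define g where "g = inv_into {0..<CARD('n)} h"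
  have "g (h k) = k" if "k < CARD('n)" for k
    using h that unfolding g_def bij_betw_def by simp
  then show "jnf_vec h (\<chi> i. u $ g i) = u"
    using assms by (auto simp: jnf_vec_def intro!: eq_vecI)
qed

lemma eigenvalues_eq_spectrum: "eigenvalues (A :: complex^'n^'n) = spectrum (jnf_mat h A)"
proof -
  have "A *v x = c *s x \<longleftrightarrow> jnf_mat h A *\<^sub>v jnf_vec h x = c \<cdot>\<^sub>v jnf_vec h x" for x c
    by (metis jnf_vec_eq_iff jnf_vec_matrix_vector_mult jnf_vec_scalar_mult)
  moreover have "x = 0 \<longleftrightarrow> jnf_vec h x = 0\<^sub>v CARD('n)" for x :: "complex^'n"
    by (metis jnf_vec_eq_iff jnf_vec_zero)
  ultimately show ?thesis
    unfolding eigenvalues_def spectrum_def eigenvalue_def eigenvector_def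
    by (auto simp: carrier_matD[OF jnf_mat_carrier] intro: jnf_vec_carrier elim!: jnf_vec_surj)
qed

lemma cmod_entry_le_if_norm_bound:
  fixes A :: "complex^'n^'n"
  assumes "norm_bound (jnf_mat h A) c"
  shows "cmod (A $ i $ j) \<le> c"
proof -
  obtain k l where "k < CARD('n)" "h k = i" "l < CARD('n)" "h l = j"
    by (metis jnf_index_surj)
  then show ?thesis
    using assms by (auto simp: norm_bound_def jnf_mat_def)
qed

end

lemma finite_eigenvalues: "finite (eigenvalues (A :: complex^'n^'n))"
proof -
  obtain h :: "nat \<Rightarrow> 'n" where "bij_betw h {0..<CARD('n)} UNIV"
    using ex_bij_betw_nat_index by blast
  then show ?thesis
    using card_finite_spectrum(1)[OF jnf_mat_carrier] by (simp add: eigenvalues_eq_spectrum)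
qed

lemma eigenvalues_nonempty: "eigenvalues (A :: complex^'n^'n) \<noteq> {}"
proof -
  obtain h :: "nat \<Rightarrow> 'n" where "bij_betw h {0..<CARD('n)} UNIV"
    using ex_bij_betw_nat_index by blast
  then show ?thesis
    using spectrum_non_empty[OF jnf_mat_carrier] by (simp add: eigenvalues_eq_spectrum)
qed

lemma spectral_radius_eq_Max: "Defs.spectral_radius A = Max (cmod ` eigenvalues A)"
  unfolding Defs.spectral_radius_def
  using finite_eigenvalues eigenvalues_nonempty by (intro cSup_eq_Max) auto

lemma spectral_radius_less_iff: "Defs.spectral_radius A < r \<longleftrightarrow> (\<forall>c\<in>eigenvalues A. cmod c < r)"
  using finite_eigenvalues[of A] eigenvalues_nonempty[of A]
  by (simp add: spectral_radius_eq_Max Max_less_iff)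

lemma cmod_eigenvalue_le_spectral_radius: "c \<in> eigenvalues A \<Longrightarrow> cmod c \<le> Defs.spectral_radius A"
  using finite_eigenvalues[of A] by (simp add: spectral_radius_eq_Max)

lemma spectral_radius_nonneg: "0 \<le> Defs.spectral_radius A"
  using eigenvalues_nonempty[of A] cmod_eigenvalue_le_spectral_radius[of _ A]
  by (metis all_not_in_conv norm_ge_zero order_trans)

lemma eigenvalue_scaleR:
  assumes "c \<in> eigenvalues A"
  shows "complex_of_real r * c \<in> eigenvalues (r *\<^sub>R A)"
proof -
  obtain v where v: "v \<noteq> 0" "A *v v = c *s v"
    using assms by (auto simp: eigenvalues_def)
  have "(r *\<^sub>R A) *v v = r *\<^sub>R (c *s v)"
    by (simp add: scaleR_matrix_vector_mult v(2))
  also have "\<dots> = (complex_of_real r * c) *s v"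
    by (simp add: Finite_Cartesian_Product.vec_eq_iff) (simp add: scaleR_conv_of_real)
  finally show ?thesis
    using v(1) by (auto simp: eigenvalues_def)
qed

lemma matpow_bounded_if_spectral_radius_less_1:
  fixes A :: "complex^'n^'n"
  assumes "Defs.spectral_radius A < 1"
  obtains C where "\<And>k x. norm (matpow A k *v x) \<le> C * norm x"
proof -
  obtain h :: "nat \<Rightarrow> 'n" where h: "bij_betw h {0..<CARD('n)} UNIV"
    using ex_bij_betw_nat_index by blast
  have "Spectral_Radius.spectral_radius (jnf_mat h A) < 1"
    using assms by (simp add: Spectral_Radius.spectral_radius_def spectral_radius_eq_Max
        eigenvalues_eq_spectrum[OF h])
  then obtain c where "\<And>k. norm_bound (jnf_mat h A ^\<^sub>m k) c"
    using spectral_radius_jnf_norm_bound_less_1_upper_triangular[OF jnf_mat_carrier] by blast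
  then have "cmod (matpow A k $ i $ j) \<le> c" for k i j
    by (metis cmod_entry_le_if_norm_bound[OF h] jnf_mat_matpow[OF h])
  then show ?thesis
    using norm_matrix_vector_mult_le that by blast
qed

text \<open>Rescaling \<open>A\<close> by \<open>1/r\<close> turns boundedness of the powers into geometric decay.\<close>

lemma matpow_decay_if_spectral_radius_less:
  fixes A :: "complex^'n^'n"
  assumes \<rho>: "Defs.spectral_radius A < r"
  obtains C where "\<And>k x. norm (matpow A k *v x) \<le> C * r ^ k * norm x"
proof -
  have r: "0 < r"
    using spectral_radius_nonneg \<rho> by (rule le_less_trans)
  have "Defs.spectral_radius ((1 / r) *\<^sub>R A) < 1"
    unfolding spectral_radius_less_iff
  proof
    fix \<mu> assume "\<mu> \<in> eigenvalues ((1 / r) *\<^sub>R A)"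
    then have "complex_of_real r * \<mu> \<in> eigenvalues A"
      using eigenvalue_scaleR[of \<mu> "(1 / r) *\<^sub>R A" r] r by simp
    then have "r * cmod \<mu> < r"
      using \<rho> r by (auto simp: spectral_radius_less_iff norm_mult)
    then show "cmod \<mu> < 1"
      using r by simp
  qed
  then obtain C where C: "\<And>k x. norm (matpow ((1 / r) *\<^sub>R A) k *v x) \<le> C * norm x"
    using matpow_bounded_if_spectral_radius_less_1 by blast
  have "norm (matpow A k *v x) \<le> C * r ^ k * norm x" for k x
    using C[of k x] r by (simp add: matpow_scaleR_mult_vec power_one_over field_simps)
  then show ?thesis
    using that by blast
qed

lemma dt_sol_Suc_Suc: "dt_sol A x (Suc (Suc t)) = (mconj A ** A) *v dt_sol A x t"
  by (simp add: vconj_matrix_vector_mult matrix_vector_mul_assoc)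

lemma dt_sol_even: "dt_sol A x (2 * k) = matpow (mconj A ** A) k *v x"
proof (induction k)
  case (Suc k)
  have "2 * Suc k = Suc (Suc (2 * k))"
    by simp
  then show ?case
    by (simp only: dt_sol_Suc_Suc Suc) (simp add: matrix_vector_mul_assoc)
qed simp

lemma schur_if_dt_sol_tendsto_0:
  assumes "\<And>x. dt_sol A x \<longlonglongrightarrow> 0"
  shows "schur (mconj A ** A)"
proof (rule ccontr)
  assume "\<not> schur (mconj A ** A)"
  then obtain c v where c: "1 \<le> cmod c" and v: "v \<noteq> 0" "(mconj A ** A) *v v = c *s v"
    by (auto simp: schur_def spectral_radius_less_iff eigenvalues_def not_less)
  have "(\<lambda>k. norm (dt_sol A v (2 * k))) \<longlonglongrightarrow> 0"
    using LIMSEQ_subseq_LIMSEQ[OF assms, of "(*) 2" v]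
    by (simp add: strict_mono_def o_def tendsto_norm_zero)
  moreover have "norm v \<le> norm (dt_sol A v (2 * k))" for k
    using mult_right_mono[OF one_le_power[OF c, of k] norm_ge_zero[of v]]
    by (simp add: dt_sol_even matpow_eigenvector[OF v(2)] norm_scalar_mult_cvec norm_power)
  ultimately have "norm v \<le> 0"
    by (intro LIMSEQ_le_const) auto
  with v(1) show False
    by simp
qed

lemma dt_sol_decay_if_schur:
  assumes "schur (mconj A ** A)"
  obtains C r where "0 \<le> r" "r < 1" "\<And>x t. norm (dt_sol A x t) \<le> C * r ^ (t div 2) * norm x"
proof -
  define r where "r = (Defs.spectral_radius (mconj A ** A) + 1) / 2"
  have r: "0 \<le> r" "r < 1" "Defs.spectral_radius (mconj A ** A) < r"
    using assms spectral_radius_nonneg[of "mconj A ** A"] unfolding schur_def r_def by auto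
  obtain C where C: "\<And>k x. norm (matpow (mconj A ** A) k *v x) \<le> C * r ^ k * norm x"
    using matpow_decay_if_spectral_radius_less[OF r(3)] by blast
  obtain K where K: "\<And>y. norm (mconj A *v y) \<le> norm y * K"
    using bounded_linear.bounded[OF matrix_vector_mul_bounded_linear] by blast
  define K' where "K' = max 1 K"
  have K': "norm (mconj A *v y) \<le> norm y * K'" for y
    unfolding K'_def by (rule order_trans[OF K mult_left_mono]) simp_all
  have "norm (dt_sol A x t) \<le> K' * C * r ^ (t div 2) * norm x" for x t
  proof -
    have even: "norm (dt_sol A x (2 * k)) \<le> C * r ^ k * norm x" for k
      by (simp add: dt_sol_even C)
    have "t = 2 * (t div 2) \<or> t = Suc (2 * (t div 2))"
      by presburger
    then consider k where "t = 2 * k" | k where "t = Suc (2 * k)"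
      by blast
    then show ?thesis
    proof cases
      case (1 k)
      have "norm (dt_sol A x t) \<le> C * r ^ k * norm x"
        using even[of k] 1 by simp
      also have "\<dots> \<le> K' * (C * r ^ k * norm x)"
        using order_trans[OF norm_ge_zero calculation] unfolding K'_def
        by (simp add: mult_le_cancel_right1)
      finally show ?thesis
        using 1 by (simp add: mult_ac)
    next
      case (2 k)
      have "norm (dt_sol A x t) = norm (mconj A *v vconj (dt_sol A x (2 * k)))"
        using 2 by simp
      also have "\<dots> \<le> norm (dt_sol A x (2 * k)) * K'"
        using K'[of "vconj (dt_sol A x (2 * k))"] by simp
      also have "\<dots> \<le> C * r ^ k * norm x * K'"
        using even unfolding K'_def by (intro mult_right_mono) auto
      finally show ?thesis
        using 2 by (simp add: mult_ac)
    qed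
  qed
  then show ?thesis
    using that r by blast
qed

lemma dt_asymp_stable_if_decay:
  assumes r: "0 \<le> r" "r < 1"
    and decay: "\<And>x t. norm (dt_sol A x t) \<le> C * r ^ (t div 2) * norm x"
  shows "dt_asymp_stable A"
proof -
  have bounded: "norm (dt_sol A x t) \<le> \<bar>C\<bar> * norm x" for x t
  proof -
    have "C * r ^ (t div 2) \<le> \<bar>C\<bar> * r ^ (t div 2)"
      using r by (simp add: mult_right_mono)
    also have "\<dots> \<le> \<bar>C\<bar>"
      using r by (simp add: mult_left_le power_le_one)
    finally show ?thesis
      using decay[of x t] by (meson mult_right_mono norm_ge_zero order_trans)
  qed
  have "dt_stable A"
    unfolding dt_stable_def
  proof (intro allI impI)
    fix \<delta> :: real assume "0 < \<delta>"
    have "\<bar>C\<bar> * norm x \<le> \<delta>" if "norm x \<le> \<delta> / (\<bar>C\<bar> + 1)" for x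
    proof -
      have "\<bar>C\<bar> * norm x \<le> \<bar>C\<bar> * (\<delta> / (\<bar>C\<bar> + 1))"
        using that by (rule mult_left_mono) simp
      also have "\<dots> \<le> \<delta>"
        using \<open>0 < \<delta>\<close> by (simp add: field_simps)
      finally show ?thesis .
    qed
    then show "\<exists>\<epsilon>>0. \<forall>x. norm x \<le> \<epsilon> \<longrightarrow> (\<forall>t. norm (dt_sol A x t) \<le> \<delta>)"
      using \<open>0 < \<delta>\<close> bounded by (intro exI[of _ "\<delta> / (\<bar>C\<bar> + 1)"]) (auto intro: order_trans)
  qed
  moreover have "dt_sol A x \<longlonglongrightarrow> 0" for x
  proof (rule Lim_null_comparison)
    show "\<forall>\<^sub>F t in sequentially. norm (dt_sol A x t) \<le> C * r ^ (t div 2) * norm x"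
      using decay by simp
    have "(\<lambda>t. r ^ (t div 2)) \<longlonglongrightarrow> 0"
      using filterlim_compose[OF LIMSEQ_power_zero filterlim_at_top_div_const_nat, of r 2] r
      by (simp add: o_def)
    then show "(\<lambda>t. C * r ^ (t div 2) * norm x) \<longlonglongrightarrow> 0"
      by (intro tendsto_mult_left_zero tendsto_mult_right_zero)
  qed
  ultimately show ?thesis
    unfolding dt_asymp_stable_def by blast
qed

lemma dt_asymp_stable_iff_schur: "dt_asymp_stable A \<longleftrightarrow> schur (mconj A ** A)"
proof
  assume "dt_asymp_stable A"
  then show "schur (mconj A ** A)"
    unfolding dt_asymp_stable_def by (blast intro: schur_if_dt_sol_tendsto_0)
next
  assume "schur (mconj A ** A)"
  then show "dt_asymp_stable A"
    by (rule dt_sol_decay_if_schur) (rule dt_asymp_stable_if_decay)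
qed

definition ct_global_solution :: "complex^'n^'n \<Rightarrow> (real \<Rightarrow> complex^'n) \<Rightarrow> bool" where
  "ct_global_solution A x \<longleftrightarrow>
     (\<forall>t. (x has_vector_derivative (mconj A *v vconj (x t))) (at t))"

lemma ct_solution_if_global: "ct_global_solution A x \<Longrightarrow> ct_solution A x"
  unfolding ct_global_solution_def ct_solution_def by (blast intro: has_vector_derivative_at_within)

lemma ct_global_solution_shift:
  assumes "ct_global_solution A x"
  shows "ct_global_solution A (\<lambda>t. x (t + T))"
  unfolding ct_global_solution_def
proof
  fix t
  have "((\<lambda>t. t + T) has_vector_derivative 1) (at t)"
    by (auto intro!: derivative_eq_intros)
  from vector_diff_chain_at[OF this assms[unfolded ct_global_solution_def, rule_format]]
  show "((\<lambda>t. x (t + T)) has_vector_derivative mconj A *v vconj (x (t + T))) (at t)"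
    by (simp add: o_def)
qed

lemma bounded_linear_scalar_mult_left: "bounded_linear (\<lambda>c::complex. c *s (v::complex^'n))"
proof (rule bounded_linear_intro[where K = "norm v"])
  show "(r *\<^sub>R c) *s v = r *\<^sub>R (c *s v)" for r c
    by (simp add: Finite_Cartesian_Product.vec_eq_iff mult_scaleR_left)
qed (simp_all add: vector_sadd_rdistrib norm_scalar_mult_cvec)

lemma bounded_linear_scalar_mult_right: "bounded_linear (\<lambda>x::complex^'n. c *s x)"
proof (rule bounded_linear_intro[where K = "cmod c"])
  show "c *s (r *\<^sub>R x) = r *\<^sub>R (c *s x)" for r x
    by (simp add: Finite_Cartesian_Product.vec_eq_iff mult_scaleR_right)
qed (simp_all add: vector_add_ldistrib norm_scalar_mult_cvec mult.commute)

lemma matrix_vector_mult_vconj_scalar_mult: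
  "M *v vconj (c *s x) = cnj c *s (M *v vconj (x :: complex^'n))"
  by (simp only: vconj_scalar_mult vector_scalar_commute)

lemma ct_global_solution_reflect:
  assumes "ct_global_solution A x"
  shows "ct_global_solution A (\<lambda>t. \<i> *s x (- t))"
  unfolding ct_global_solution_def
proof
  fix t
  have "((\<lambda>t. - t) has_vector_derivative -1) (at t)"
    by (auto intro!: derivative_eq_intros)
  from vector_diff_chain_at[OF this assms[unfolded ct_global_solution_def, rule_format]]
  have "((\<lambda>t. x (- t)) has_vector_derivative - (mconj A *v vconj (x (- t)))) (at t)"
    by (simp add: o_def)
  from bounded_linear.has_vector_derivative[OF bounded_linear_scalar_mult_right this, of \<i>]
  show "((\<lambda>t. \<i> *s x (- t)) has_vector_derivative mconj A *v vconj (\<i> *s x (- t))) (at t)"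
    by (simp add: matrix_vector_mult_vconj_scalar_mult vector_smult_lneg)
qed

lemma has_vector_derivative_cexp_real:
  fixes s :: complex
  shows "((\<lambda>t. exp (of_real t * s)) has_vector_derivative s * exp (of_real t * s)) (at t)"
proof -
  have "((\<lambda>z. exp (z * s)) has_field_derivative s * exp (of_real t * s)) (at (of_real t))"
    by (auto intro!: derivative_eq_intros)
  then show ?thesis
    by (rule has_vector_derivative_real_field)
qed

lemma ct_global_solution_exp:
  fixes A :: "complex^'n^'n"
  assumes eig: "(mconj A ** A) *v v = (s * s) *s v"
  shows "ct_global_solution A
    (\<lambda>t. (s * exp (of_real t * s)) *s v + exp (of_real t * cnj s) *s (mconj A *v vconj v))"
    (is "ct_global_solution A ?x")
  unfolding ct_global_solution_def
proof
  fix t :: real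
  define w where "w = mconj A *v vconj v"
  have "mconj A *v vconj w = (s * s) *s v"
    unfolding w_def vconj_matrix_vector_mult mconj_mconj vconj_vconj matrix_vector_mul_assoc
    by (rule eig)
  then have rhs: "mconj A *v vconj (?x t)
      = (s * (s * exp (of_real t * s))) *s v + (cnj s * exp (of_real t * cnj s)) *s w"
    by (simp add: w_def vconj_add vconj_scalar_mult matrix_vector_right_distrib
        vector_scalar_commute vector_smult_assoc exp_cnj ac_simps)
  have "(?x has_vector_derivative
      (s * (s * exp (of_real t * s))) *s v + (cnj s * exp (of_real t * cnj s)) *s w) (at t)"
    unfolding w_def
    by (intro has_vector_derivative_add
        bounded_linear.has_vector_derivative[OF bounded_linear_scalar_mult_left]
        bounded_linear.has_vector_derivative[OF bounded_linear_mult_right]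
        has_vector_derivative_cexp_real)
  then show "(?x has_vector_derivative mconj A *v vconj (?x t)) (at t)"
    unfolding rhs .
qed

lemma ex_nonzero_ct_global_solution: "\<exists>x. ct_global_solution A x \<and> x 0 \<noteq> 0"
proof -
  obtain \<mu> v where v: "v \<noteq> 0" "(mconj A ** A) *v v = \<mu> *s v"
    using eigenvalues_nonempty[of "mconj A ** A"] by (auto simp: eigenvalues_def)
  define w where "w = mconj A *v vconj v"
  show ?thesis
  proof (cases "w = 0")
    case True
    then have "ct_global_solution A (\<lambda>t. v)"
      by (simp add: ct_global_solution_def w_def)
    with v(1) show ?thesis
      by blast
  next
    case False
    define s where "s = csqrt \<mu>"
    have "s * s = \<mu>" "(- s) * (- s) = \<mu>"
      unfolding s_def by (simp_all flip: power2_eq_square)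
    then have sol: "ct_global_solution A
        (\<lambda>t. (s' * exp (of_real t * s')) *s v + exp (of_real t * cnj s') *s w)"
      if "s' \<in> {s, - s}" for s'
      using that v(2) unfolding w_def by (auto intro: ct_global_solution_exp)
    have "(s *s v + w) + ((- s) *s v + w) = 2 *s w"
      by (simp add: Finite_Cartesian_Product.vec_eq_iff)
    with False have "s *s v + w \<noteq> 0 \<or> (- s) *s v + w \<noteq> 0"
      by auto
    then show ?thesis
      using sol[of s] sol[of "- s"] by auto
  qed
qed

lemma ct_global_solution_backward_tendsto_0:
  assumes "ct_asymp_stable A" "ct_global_solution A x"
  shows "((\<lambda>t. x (- t)) \<longlongrightarrow> 0) at_top"
proof -
  have "ct_solution A (\<lambda>t. \<i> *s x (- t))"
    using assms(2) by (intro ct_solution_if_global ct_global_solution_reflect)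
  then have "((\<lambda>t. \<i> *s x (- t)) \<longlongrightarrow> 0) at_top"
    using assms(1) unfolding ct_asymp_stable_def by blast
  then have "((\<lambda>t. norm (\<i> *s x (- t))) \<longlongrightarrow> 0) at_top"
    by (rule tendsto_norm_zero)
  then show ?thesis
    by (simp add: norm_scalar_mult_cvec tendsto_norm_zero_iff)
qed

lemma not_ct_asymp_stable: "\<not> ct_asymp_stable A"
proof
  assume stable: "ct_asymp_stable A"
  obtain x where x: "ct_global_solution A x" "x 0 \<noteq> 0"
    using ex_nonzero_ct_global_solution by blast
  define \<delta> where "\<delta> = norm (x 0) / 2"
  have "0 < \<delta>"
    using x(2) by (simp add: \<delta>_def)
  then obtain \<epsilon> where "0 < \<epsilon>" and small:
      "\<forall>z. ct_solution A z \<and> norm (z 0) \<le> \<epsilon> \<longrightarrow> (\<forall>t\<ge>0. norm (z t) \<le> \<delta>)"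
    using stable unfolding ct_asymp_stable_def ct_stable_def by blast
  have "\<forall>\<^sub>F t in at_top. norm (x (- t)) < \<epsilon>"
    using ct_global_solution_backward_tendsto_0[OF stable x(1), THEN tendsto_norm_zero]
      \<open>0 < \<epsilon>\<close> by (rule order_tendstoD(2))
  then obtain N where N: "\<And>t. N \<le> t \<Longrightarrow> norm (x (- t)) < \<epsilon>"
    unfolding eventually_at_top_linorder by blast
  define T where "T = max N 0"
  have "ct_solution A (\<lambda>t. x (t + - T))"
    using x(1) by (intro ct_solution_if_global ct_global_solution_shift)
  moreover have "norm (x (0 + - T)) \<le> \<epsilon>"
    using N[of T] by (simp add: T_def)
  ultimately have "\<forall>t\<ge>0. norm (x (t + - T)) \<le> \<delta>"
    using small by blast
  moreover have "0 \<le> T"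
    by (simp add: T_def)
  ultimately have "norm (x (T + - T)) \<le> \<delta>"
    by blast
  then show False
    using x(2) by (simp add: \<delta>_def)
qed

theorem corollary4:
  fixes A2 :: "complex^'n^'n"
  shows "(dt_asymp_stable A2 \<longleftrightarrow> schur (mconj A2 ** A2)) \<and> \<not> ct_asymp_stable A2"
  using dt_asymp_stable_iff_schur not_ct_asymp_stable by blast

end
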